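(* Let $C \subset \mathbb{R}^n$ be convex and closed with nonempty interior, and let $h\colon C\to\mathbb{R}$ be Legendre on $C$ and continuous on $C$, such that condition (A) holds: for every sequence $(x_k)_{k\in\mathbb{N}} \subset \mathrm{int}\, C$ and every $y \in C$, if $D_h(y,x_k) \to 0$ then $x_k \to y$. Then $h$ is strictly convex on $C$.
   Context: A convex function $h \colon C \to \mathbb{R}$ on a convex set $C\subset\mathbb{R}^n$ with nonempty interior is called Legendre if (1) $h$ is continuously differentiable on $\mathrm{int}\, C$ and $\|\nabla h(x)\| \to +\infty$ whenever $x \in \mathrm{int}\, C$ approaches a point of the boundary of $C$; and (2) $h$ is strictly convex on $\mathrm{int}\, C$. The Bregman divergence is $D_h(y,x) = h(y) - h(x) - \langle \nabla h(x), y - x\rangle$ for $y \in C$, $x \in \mathrm{int}\, C$. *)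

theory Defs
  imports "HOL-Analysis.Analysis"
begin

definition strictly_convex_on :: "'a::real_vector set \<Rightarrow> ('a \<Rightarrow> real) \<Rightarrow> bool" where
  "strictly_convex_on S f \<longleftrightarrow>
     (\<forall>x\<in>S. \<forall>y\<in>S. x \<noteq> y \<longrightarrow> (\<forall>t::real. 0 < t \<and> t < 1 \<longrightarrow>
        f ((1 - t) *\<^sub>R x + t *\<^sub>R y) < (1 - t) * f x + t * f y))"

text \<open>The gradient of h at x (unique wherever h is differentiable at x).\<close>
definition grad :: "('a::euclidean_space \<Rightarrow> real) \<Rightarrow> 'a \<Rightarrow> 'a" where
  "grad h x = (SOME D. GDERIV h x :> D)"

definition legendre :: "'a::euclidean_space set \<Rightarrow> ('a \<Rightarrow> real) \<Rightarrow> bool" where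
  "legendre C h \<longleftrightarrow>
     convex C \<and> interior C \<noteq> {} \<and> convex_on C h \<and>
     (\<forall>x\<in>interior C. \<exists>D. GDERIV h x :> D) \<and>
     continuous_on (interior C) (grad h) \<and>
     (\<forall>b\<in>frontier C. filterlim (\<lambda>x. norm (grad h x)) at_top (at b within interior C)) \<and>
     strictly_convex_on (interior C) h"

definition bregman :: "('a::euclidean_space \<Rightarrow> real) \<Rightarrow> 'a \<Rightarrow> 'a \<Rightarrow> real" where
  "bregman h y x = h y - h x - inner (grad h x) (y - x)"

end

(* If h were not strictly convex on C, some z = (1 - t) x + t y with x \<noteq> y would satisfy
   h z \<ge> (1 - t) h x + t h y. The affine part of D_h(., w) cancels in convex combinations, so
   (1 - t) D_h(x, w) + t D_h(y, w) \<le> D_h(z, w) for every interior point w. Approaching z from the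
   interior along a segment, continuity of h alone makes D_h(z, w_k) tend to 0; since Bregman
   divergences are nonnegative, D_h(x, w_k) and D_h(y, w_k) tend to 0 as well, and condition (A)
   yields w_k -> x and w_k -> y, contradicting x \<noteq> y. *)

theory Submission
  imports Defs
begin

lemma convex_on_above_tangent:
  fixes h :: "'a::real_normed_vector \<Rightarrow> real"
  assumes h: "convex_on C h" and w: "w \<in> C" and u: "u \<in> C"
    and deriv: "(h has_derivative h') (at w within C)"
  shows "h w + h' (u - w) \<le> h u"
proof -
  define S where "S = {0<..1::real}"
  define seg where "seg s = w + s *\<^sub>R (u - w)" for s :: real
  have seg_convex_comb: "seg s = (1 - s) *\<^sub>R w + s *\<^sub>R u" for s
    unfolding seg_def by (simp add: algebra_simps)
  have seg_in_C: "seg ` S \<subseteq> C"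
    using convexD_alt[OF convex_on_imp_convex[OF h] w u]
    by (auto simp: S_def seg_convex_comb)
  have "((\<lambda>s. h (seg s)) has_derivative (\<lambda>s. h' (s *\<^sub>R (u - w)))) (at 0 within S)"
  proof -
    have "(seg has_derivative (\<lambda>s. s *\<^sub>R (u - w))) (at 0 within S)"
      unfolding seg_def by (auto intro!: derivative_eq_intros)
    moreover have "(h has_derivative h') (at (seg 0) within seg ` S)"
      using has_derivative_subset[OF deriv seg_in_C] by (simp add: seg_def)
    ultimately show ?thesis
      using diff_chain_within by (fastforce simp: o_def)
  qed
  moreover have "(\<lambda>s. h' (s *\<^sub>R (u - w))) = (*) (h' (u - w))"
    using linear.scaleR[OF has_derivative_linear[OF deriv]] by (simp add: fun_eq_iff)
  ultimately have "((\<lambda>s. h (seg s)) has_field_derivative h' (u - w)) (at 0 within S)"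
    by (simp add: has_field_derivative_def)
  then have slope_lim: "((\<lambda>s. (h (seg s) - h w) / s) \<longlongrightarrow> h' (u - w)) (at 0 within S)"
    by (simp add: has_field_derivative_iff seg_def)
  have "(h (seg s) - h w) / s \<le> h u - h w" if "s \<in> S" for s
  proof -
    have "h (seg s) \<le> (1 - s) * h w + s * h u"
      using that convex_onD[OF h, of s w u] w u by (simp add: S_def seg_convex_comb)
    then have "h (seg s) - h w \<le> (h u - h w) * s"
      by (simp add: algebra_simps)
    with that show ?thesis
      by (subst pos_divide_le_eq) (simp_all add: S_def)
  qed
  then have "eventually (\<lambda>s. (h (seg s) - h w) / s \<le> h u - h w) (at 0 within S)"
    by (auto simp: eventually_at_filter)
  moreover have "at 0 within S \<noteq> bot"
    by (simp add: at_within_eq_bot_iff S_def)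
  ultimately have "h' (u - w) \<le> h u - h w"
    using slope_lim tendsto_upperbound by blast
  then show ?thesis by simp
qed

lemma tendsto_zero_if_weighted_sum_le:
  fixes a b e :: "'i \<Rightarrow> real"
  assumes a: "\<And>i. 0 \<le> a i" and b: "\<And>i. 0 \<le> b i" and p: "0 < p" and q: "0 \<le> q"
    and le: "\<And>i. p * a i + q * b i \<le> e i" and e: "(e \<longlongrightarrow> 0) F"
  shows "(a \<longlongrightarrow> 0) F"
proof -
  have "norm (a i) \<le> e i / p" for i
    using a[of i] le[of i] mult_nonneg_nonneg[OF q b[of i]] p
    by (simp add: pos_le_divide_eq mult.commute)
  then have "eventually (\<lambda>i. norm (a i) \<le> e i / p) F"
    by (rule always_eventually[OF allI])
  then show ?thesis
    using tendsto_divide_zero[OF e] by (rule Lim_null_comparison)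
qed

lemma legendre_gderiv_grad:
  assumes "legendre C h" and "x \<in> interior C"
  shows "GDERIV h x :> grad h x"
  using assms unfolding legendre_def grad_def by (metis someI_ex)

lemma bregman_nonneg:
  assumes "legendre C h" and "x \<in> interior C" and "y \<in> C"
  shows "0 \<le> bregman h y x"
proof -
  have "(h has_derivative (\<lambda>v. inner v (grad h x))) (at x within C)"
    using legendre_gderiv_grad[OF assms(1,2)] by (simp add: gderiv_def has_derivative_at_withinI)
  then have "h x + inner (y - x) (grad h x) \<le> h y"
    using assms interior_subset convex_on_above_tangent[of C h x y]
    unfolding legendre_def by blast
  then show ?thesis
    by (simp add: bregman_def inner_commute)
qed

lemma bregman_convex_combination:
  fixes h :: "'a::euclidean_space \<Rightarrow> real"
  assumes "z = (1 - t) *\<^sub>R x + t *\<^sub>R y"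
  shows "bregman h z w = (1 - t) * bregman h x w + t * bregman h y w + (h z - (1 - t) * h x - t * h y)"
  unfolding bregman_def assms by (simp add: algebra_simps inner_diff_right)

text \<open>The tangent inequality at w, evaluated at c, bounds D_h(z, w) by values of h alone;
  this is what lets mere continuity of h on C drive D_h(z, w) to 0 as s tends to 0.\<close>
lemma legendre_bregman_shrink_le:
  assumes "legendre C h" and c: "c \<in> interior C" and z: "z \<in> C" and s: "0 < s" "s < 1"
  defines "w \<equiv> z - s *\<^sub>R (z - c)"
  shows "bregman h z w \<le> h z - h w - s / (1 - s) * (h w - h c)"
proof -
  have "convex C"
    using \<open>legendre C h\<close> by (simp add: legendre_def)
  then have w: "w \<in> interior C"
    unfolding w_def using mem_interior_convex_shrink[OF _ c z] s by simp
  let ?g = "grad h w"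
  have "0 \<le> bregman h c w"
    using bregman_nonneg[OF \<open>legendre C h\<close> w] c interior_subset by blast
  moreover have "c - w = - (1 - s) *\<^sub>R (z - c)" and "z - w = s *\<^sub>R (z - c)"
    unfolding w_def by (simp_all add: algebra_simps)
  ultimately have "h w - h c \<le> (1 - s) * inner ?g (z - c)"
    by (simp add: bregman_def algebra_simps)
  then have "(h w - h c) / (1 - s) \<le> inner ?g (z - c)"
    using s by (simp add: pos_divide_le_eq mult.commute)
  then have "s * ((h w - h c) / (1 - s)) \<le> s * inner ?g (z - c)"
    using s by (intro mult_left_mono) auto
  moreover have "bregman h z w = h z - h w - s * inner ?g (z - c)"
    using \<open>z - w = s *\<^sub>R (z - c)\<close> by (simp add: bregman_def)
  ultimately show ?thesis
    by simp
qed

lemma legendre_obtain_bregman_tendsto_zero: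
  assumes "legendre C h" and "continuous_on C h" and z: "z \<in> C"
  obtains w where "\<And>k. w k \<in> interior C" and "(\<lambda>k. bregman h z (w k)) \<longlonglongrightarrow> 0"
proof -
  have "convex C" and "interior C \<noteq> {}"
    using \<open>legendre C h\<close> by (simp_all add: legendre_def)
  then obtain c where c: "c \<in> interior C"
    by blast
  define s where "s k = inverse (real (k + 2))" for k
  define w where "w k = z - s k *\<^sub>R (z - c)" for k
  have s_bounds: "0 < s k" "s k < 1" for k
    by (simp_all add: s_def field_simps)
  have w_int: "w k \<in> interior C" for k
    unfolding w_def using mem_interior_convex_shrink[OF \<open>convex C\<close> c z] s_bounds[of k] by simp
  have "s \<longlonglongrightarrow> 0"
    unfolding s_def using LIMSEQ_ignore_initial_segment[OF lim_inverse_n, of 2] by simp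
  then have "w \<longlonglongrightarrow> z - 0 *\<^sub>R (z - c)"
    unfolding w_def by (intro tendsto_intros)
  moreover have "eventually (\<lambda>k. w k \<in> C) sequentially"
    using subsetD[OF interior_subset w_int] by (rule always_eventually[OF allI])
  ultimately have hw: "(\<lambda>k. h (w k)) \<longlonglongrightarrow> h z"
    using continuous_on_tendsto_compose[OF \<open>continuous_on C h\<close> _ z] by simp
  define e where "e k = h z - h (w k) - s k / (1 - s k) * (h (w k) - h c)" for k
  have "e \<longlonglongrightarrow> h z - h z - 0 / (1 - 0) * (h z - h c)"
    unfolding e_def by (intro tendsto_intros hw \<open>s \<longlonglongrightarrow> 0\<close>) simp
  then have e_lim: "e \<longlonglongrightarrow> 0"
    by simp
  have "norm (bregman h z (w k)) \<le> e k" for k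
    using bregman_nonneg[OF \<open>legendre C h\<close> w_int z]
      legendre_bregman_shrink_le[OF \<open>legendre C h\<close> c z s_bounds[of k]]
    unfolding e_def w_def by simp
  then have "eventually (\<lambda>k. norm (bregman h z (w k)) \<le> e k) sequentially"
    by (rule always_eventually[OF allI])
  then have "(\<lambda>k. bregman h z (w k)) \<longlonglongrightarrow> 0"
    using e_lim by (rule Lim_null_comparison)
  with w_int that show ?thesis by blast
qed

theorem lemma6:
  fixes C :: "'a::euclidean_space set" and h :: "'a \<Rightarrow> real"
  assumes "convex C" and "closed C" and "interior C \<noteq> {}"
    and "legendre C h"
    and "continuous_on C h"
    and condA: "\<And>(x :: nat \<Rightarrow> 'a) y. (\<forall>k. x k \<in> interior C) \<Longrightarrow> y \<in> C \<Longrightarrow>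
                 (\<lambda>k. bregman h y (x k)) \<longlonglongrightarrow> 0 \<Longrightarrow> x \<longlonglongrightarrow> y"
  shows "strictly_convex_on C h"
  unfolding strictly_convex_on_def
proof (intro ballI impI allI, rule ccontr)
  fix x y t
  assume x: "x \<in> C" and y: "y \<in> C" and "x \<noteq> y" and t: "0 < t \<and> t < 1"
    and "\<not> h ((1 - t) *\<^sub>R x + t *\<^sub>R y) < (1 - t) * h x + t * h y"
  define z where "z = (1 - t) *\<^sub>R x + t *\<^sub>R y"
  have jensen_gap: "0 \<le> h z - (1 - t) * h x - t * h y"
    using \<open>\<not> h ((1 - t) *\<^sub>R x + t *\<^sub>R y) < _\<close> by (simp add: z_def)
  have "z \<in> C"
    using convexD_alt[OF \<open>convex C\<close> x y] t by (simp add: z_def)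
  then obtain w where w: "\<And>k. w k \<in> interior C"
    and z_lim: "(\<lambda>k. bregman h z (w k)) \<longlonglongrightarrow> 0"
    using legendre_obtain_bregman_tendsto_zero \<open>legendre C h\<close> \<open>continuous_on C h\<close> by blast
  have weighted: "(1 - t) * bregman h x (w k) + t * bregman h y (w k) \<le> bregman h z (w k)" for k
    using bregman_convex_combination[OF z_def, of h "w k"] jensen_gap by simp
  have x_nonneg: "0 \<le> bregman h x (w k)" and y_nonneg: "0 \<le> bregman h y (w k)" for k
    using bregman_nonneg[OF \<open>legendre C h\<close> w] x y by auto
  have "(\<lambda>k. bregman h x (w k)) \<longlonglongrightarrow> 0"
    using t by (intro tendsto_zero_if_weighted_sum_le[OF x_nonneg y_nonneg _ _ weighted z_lim]) auto
  moreover have "(\<lambda>k. bregman h y (w k)) \<longlonglongrightarrow> 0"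
    using t weighted
    by (intro tendsto_zero_if_weighted_sum_le[OF y_nonneg x_nonneg _ _ _ z_lim, of t "1 - t"])
      (auto simp: add.commute)
  ultimately have "w \<longlonglongrightarrow> x" "w \<longlonglongrightarrow> y"
    using condA w x y by blast+
  with \<open>x \<noteq> y\<close> show False
    using LIMSEQ_unique by blast
qed

end
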